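(* Consider the quadratic finite-horizon dynamic multi-agent system described in the context, with constants $\gamma,\alpha,\beta,\rho>0$ such that $\|\mathbf x_i(0)\|\le\gamma$, $\|\mathbf A_i\|\le\alpha$, $\|\mathbf B_i\|\le\beta$ and $\mathbf H_i\succeq\rho\mathbf I$ for all $i\in\mathcal V$, and assume $C(t)>0$ for all $t\in\mathcal T$. Let $\lambda^\dagger>0$ and let $\delta_{\max}>0$ satisfy, for every $k\in\mathcal T$, $$\delta_{\max}\sum_{t=k+1}^{N}\Big[\gamma\,\alpha^{2t-k-1}+\beta\sum_{\substack{j=0\\ j\neq k}}^{t-1}\sqrt{\tfrac{C(j)}{\rho}}\;\alpha^{2t-j-k-2}\Big]\;\le\;\frac{\sqrt{C(k)\rho}}{n\beta}\,\lambda^\dagger .$$ Then for every choice of symmetric positive definite matrices $\mathbf Q_i,\mathbf R_i$ ($i\in\mathcal V$) with $\|\mathbf Q_i\|\le\delta_{\max}$, every competitive equilibrium $(\boldsymbol\lambda^\ast,\mathbf U^\ast,\mathbf E^\ast)$ satisfies $\lambda^\ast_t\le\lambda^\dagger$ for all $t\in\mathcal T$.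
   Context: Finite-horizon dynamic multi-agent system: $n$ agents $\mathcal V=\{1,\dots,n\}$, horizon $N\ge1$, $\mathcal T=\{0,\dots,N-1\}$. Agent $i$ has state $\mathbf x_i(t)\in\mathbb R^d$, input $\mathbf u_i(t)\in\mathbb R^m$, dynamics $\mathbf x_i(t+1)=\mathbf A_i\mathbf x_i(t)+\mathbf B_i\mathbf u_i(t)$ with given $\mathbf x_i(0)$, excess resource $a_i(t)\in\mathbb R$, and $C(t)=\sum_{i=1}^na_i(t)$. Quadratic case: agent $i$'s parameter is $\theta_i=(\mathbf Q_i,\mathbf R_i)$ with $\mathbf Q_i\in\mathbb R^{d\times d}$, $\mathbf R_i\in\mathbb R^{m\times m}$ symmetric positive definite; running utility $f(\mathbf x,\mathbf u;\theta_i)=-\mathbf x^\top\mathbf Q_i\mathbf x-\mathbf u^\top\mathbf R_i\mathbf u$; terminal utility $\phi(\mathbf x;\theta_i)=-\mathbf x^\top\mathbf Q_i\mathbf x$; consumption $h_i(\mathbf u)=\mathbf u^\top\mathbf H_i\mathbf u$ with $\mathbf H_i$ symmetric positive definite. Norms are Euclidean / induced operator norms. A competitive equilibrium is a triple $(\boldsymbol\lambda^\ast,\mathbf U^\ast,\mathbf E^\ast)$, $\boldsymbol\lambda^\ast=(\lambda^\ast_0,\dots,\lambda^\ast_{N-1})\in\mathbb R^N$, such that (i) for each $i\in\mathcal V$, $(\mathbf U_i^\ast,\mathbf E_i^\ast)=((\mathbf u_i^\ast(t))_{t\in\mathcal T},(e_i^\ast(t))_{t\in\mathcal T})$ is a maximizer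 of $\phi(\mathbf x_i(N);\theta_i)+\sum_{t=0}^{N-1}\big(f(\mathbf x_i(t),\mathbf u_i(t);\theta_i)+\lambda^\ast_t e_i(t)\big)$ over all inputs $\mathbf u_i(t)\in\mathbb R^m$ and trades $e_i(t)\in\mathbb R$ subject to the dynamics and $e_i(t)\le a_i(t)-h_i(\mathbf u_i(t))$ for all $t\in\mathcal T$; and (ii) $\sum_{i=1}^ne_i^\ast(t)=0$ for all $t\in\mathcal T$. *)

theory Defs
  imports "HOL-Analysis.Analysis"
begin

definition sym_pd :: "real^'k^'k \<Rightarrow> bool" where
  "sym_pd M \<longleftrightarrow> transpose M = M \<and> (\<forall>x. x \<noteq> 0 \<longrightarrow> 0 < x \<bullet> (M *v x))"

fun state :: "real^'d^'d \<Rightarrow> real^'m^'d \<Rightarrow> real^'d \<Rightarrow> (nat \<Rightarrow> real^'m) \<Rightarrow> nat \<Rightarrow> real^'d" where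
  "state A B x0 u 0 = x0"
| "state A B x0 u (Suc t) = A *v state A B x0 u t + B *v u t"

definition run_util :: "real^'d^'d \<Rightarrow> real^'m^'m \<Rightarrow> real^'d \<Rightarrow> real^'m \<Rightarrow> real" where
  "run_util Q R x u = - (x \<bullet> (Q *v x)) - (u \<bullet> (R *v u))"

definition term_util :: "real^'d^'d \<Rightarrow> real^'d \<Rightarrow> real" where
  "term_util Q x = - (x \<bullet> (Q *v x))"

definition consumption :: "real^'m^'m \<Rightarrow> real^'m \<Rightarrow> real" where
  "consumption H u = u \<bullet> (H *v u)"

definition agent_payoff ::
  "nat \<Rightarrow> real^'d^'d \<Rightarrow> real^'m^'d \<Rightarrow> real^'d \<Rightarrow> real^'d^'d \<Rightarrow> real^'m^'m
   \<Rightarrow> (nat \<Rightarrow> real) \<Rightarrow> (nat \<Rightarrow> real^'m) \<Rightarrow> (nat \<Rightarrow> real) \<Rightarrow> real" where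
  "agent_payoff N A B x0 Q R lam u e =
     term_util Q (state A B x0 u N)
     + (\<Sum>t<N. run_util Q R (state A B x0 u t) (u t) + lam t * e t)"

definition agent_feasible ::
  "nat \<Rightarrow> real^'m^'m \<Rightarrow> (nat \<Rightarrow> real) \<Rightarrow> (nat \<Rightarrow> real^'m) \<Rightarrow> (nat \<Rightarrow> real) \<Rightarrow> bool" where
  "agent_feasible N H a u e \<longleftrightarrow> (\<forall>t<N. e t \<le> a t - consumption H (u t))"

definition competitive_equilibrium ::
  "nat \<Rightarrow> nat \<Rightarrow> (nat \<Rightarrow> real^'d^'d) \<Rightarrow> (nat \<Rightarrow> real^'m^'d) \<Rightarrow> (nat \<Rightarrow> real^'d)
   \<Rightarrow> (nat \<Rightarrow> real^'d^'d) \<Rightarrow> (nat \<Rightarrow> real^'m^'m) \<Rightarrow> (nat \<Rightarrow> real^'m^'m)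
   \<Rightarrow> (nat \<Rightarrow> nat \<Rightarrow> real)
   \<Rightarrow> (nat \<Rightarrow> real) \<Rightarrow> (nat \<Rightarrow> nat \<Rightarrow> real^'m) \<Rightarrow> (nat \<Rightarrow> nat \<Rightarrow> real) \<Rightarrow> bool" where
  "competitive_equilibrium n N A B x0 Q R H a lam U E \<longleftrightarrow>
     (\<forall>i<n. agent_feasible N (H i) (a i) (U i) (E i) \<and>
        (\<forall>u e. agent_feasible N (H i) (a i) u e \<longrightarrow>
           agent_payoff N (A i) (B i) (x0 i) (Q i) (R i) lam u e
             \<le> agent_payoff N (A i) (B i) (x0 i) (Q i) (R i) lam (U i) (E i)))
     \<and> (\<forall>t<N. (\<Sum>i<n. E i t) = 0)"

end

theory Submission
  imports Defs
begin

text \<open>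
If the price at time \<open>k\<close> exceeded \<open>\<lambda>\<^sup>\<dagger>\<close>, every budget constraint at \<open>k\<close> would bind, so market
clearing gives total consumption \<open>C(k)\<close> and some agent \<open>i\<close> consumes at least \<open>C(k)/n\<close>.
Scaling that agent's input at time \<open>k\<close> by \<open>s\<close>, while spending all its slack, makes its payoff
a concave quadratic in \<open>s\<close> that is maximal at \<open>s = 1\<close>. The first-order condition bounds
\<open>\<lambda>\<^sub>k h\<^sub>i(u\<^sub>i(k))\<close> by the cross terms between the trajectory with \<open>u\<^sub>i(k)\<close> removed and the
impulse response of \<open>u\<^sub>i(k)\<close>, weighted by \<open>Q\<^sub>i\<close>. Estimating both trajectories through
\<open>\<alpha>, \<beta>, \<gamma>\<close> and the inputs through \<open>\<rho> \<parallel>u\<^sub>i(j)\<parallel>\<^sup>2 \<le> C(j)\<close>, the hypothesis on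
\<open>\<delta>\<^sub>m\<^sub>a\<^sub>x\<close> yields \<open>\<lambda>\<^sub>k h\<^sub>i(u\<^sub>i(k)) \<le> \<lambda>\<^sup>\<dagger> h\<^sub>i(u\<^sub>i(k))\<close> with \<open>h\<^sub>i(u\<^sub>i(k)) > 0\<close>.
\<close>

lemma norm_matrix_vector_le_onorm:
  assumes "onorm (\<lambda>x. M *v x) \<le> c"
  shows "norm (M *v (x::real^'a)) \<le> c * norm x"
proof -
  have "bounded_linear (\<lambda>x. M *v (x::real^'a))"
    by (simp add: linear_conv_bounded_linear)
  then have "norm (M *v x) \<le> onorm (\<lambda>x. M *v x) * norm x" by (rule onorm)
  also have "\<dots> \<le> c * norm x" using assms by (simp add: mult_right_mono)
  finally show ?thesis .
qed

lemma state_add_scaled_input: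
  "state A B x0 (\<lambda>j. v j + s *\<^sub>R w j) t = state A B x0 v t + s *\<^sub>R state A B 0 w t"
  by (induction t) (simp_all add: algebra_simps)

lemma state_impulse_before:
  "t \<le> k \<Longrightarrow> state A B 0 (\<lambda>j. if j = k then v else 0) t = 0"
  by (induction t) auto

lemma norm_state_le:
  assumes "\<And>x. norm (A *v x) \<le> \<alpha> * norm x" "\<And>u. norm (B *v u) \<le> \<beta> * norm u" "0 \<le> \<alpha>"
  shows "norm (state A B x0 u t) \<le> \<alpha>^t * norm x0 + (\<Sum>j<t. \<alpha>^(t-1-j) * (\<beta> * norm (u j)))"
proof (induction t)
  case 0
  then show ?case by simp
next
  case (Suc t)
  have shift: "\<alpha> * (\<Sum>j<t. \<alpha>^(t-1-j) * (\<beta> * norm (u j))) = (\<Sum>j<t. \<alpha>^(t-j) * (\<beta> * norm (u j)))"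
    unfolding sum_distrib_left by (rule sum.cong) (auto simp: Suc_diff_Suc simp flip: power_Suc)
  have "norm (state A B x0 u (Suc t)) \<le> norm (A *v state A B x0 u t) + norm (B *v u t)"
    by (simp add: norm_triangle_ineq)
  also have "\<dots> \<le> \<alpha> * norm (state A B x0 u t) + \<beta> * norm (u t)"
    using assms(1,2) by (rule add_mono)
  also have "\<dots> \<le> \<alpha> * (\<alpha>^t * norm x0 + (\<Sum>j<t. \<alpha>^(t-1-j) * (\<beta> * norm (u j)))) + \<beta> * norm (u t)"
    using Suc assms(3) by (simp add: mult_left_mono)
  also have "\<dots> = \<alpha>^Suc t * norm x0 + (\<Sum>j<Suc t. \<alpha>^(Suc t-1-j) * (\<beta> * norm (u j)))"
    using shift by (simp add: algebra_simps)
  finally show ?case .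
qed

lemma norm_state_impulse_le:
  assumes "\<And>x. norm (A *v x) \<le> \<alpha> * norm x" "\<And>u. norm (B *v u) \<le> \<beta> * norm u" "0 \<le> \<alpha>"
    and "k < t"
  shows "norm (state A B 0 (\<lambda>j. if j = k then v else 0) t) \<le> \<alpha>^(t-k-1) * (\<beta> * norm v)"
proof -
  have "norm (state A B 0 (\<lambda>j. if j = k then v else 0) t)
      \<le> (\<Sum>j<t. \<alpha>^(t-1-j) * (\<beta> * norm (if j = k then v else 0)))"
    using norm_state_le[OF assms(1-3), of 0 "\<lambda>j. if j = k then v else 0" t] by simp
  also have "\<dots> = (\<Sum>j<t. if j = k then \<alpha>^(t-k-1) * (\<beta> * norm v) else 0)"
    by (rule sum.cong) auto
  also have "\<dots> = \<alpha>^(t-k-1) * (\<beta> * norm v)"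
    using assms(4) by simp
  finally show ?thesis .
qed

lemma norm_state_without_input_le:
  assumes "\<And>x. norm (A *v x) \<le> \<alpha> * norm x" "\<And>u. norm (B *v u) \<le> \<beta> * norm u"
    and "0 \<le> \<alpha>" "0 \<le> \<beta>" "k < t"
    and "norm x0 \<le> \<gamma>" "\<And>j. j \<noteq> k \<Longrightarrow> j < t \<Longrightarrow> norm (u j) \<le> s j"
  shows "norm (state A B x0 (u(k := 0)) t) \<le> \<gamma> * \<alpha>^t + \<beta> * (\<Sum>j\<in>{0..t-1}-{k}. s j * \<alpha>^(t-1-j))"
proof -
  have range: "{0..t-1} - {k} = {..<t} - {k}"
    using assms(5) by auto
  have "norm (state A B x0 (u(k := 0)) t)
      \<le> \<alpha>^t * norm x0 + (\<Sum>j<t. \<alpha>^(t-1-j) * (\<beta> * norm ((u(k := 0)) j)))"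
    by (rule norm_state_le[OF assms(1-3)])
  also have "(\<Sum>j<t. \<alpha>^(t-1-j) * (\<beta> * norm ((u(k := 0)) j)))
      = (\<Sum>j\<in>{..<t}-{k}. \<alpha>^(t-1-j) * (\<beta> * norm (u j)))"
    by (rule sum.mono_neutral_cong_right) auto
  also have "\<alpha>^t * norm x0 + \<dots> \<le> \<alpha>^t * \<gamma> + (\<Sum>j\<in>{..<t}-{k}. \<alpha>^(t-1-j) * (\<beta> * s j))"
    using assms(3,4,6,7) by (intro add_mono sum_mono mult_left_mono) auto
  also have "\<dots> = \<gamma> * \<alpha>^t + \<beta> * (\<Sum>j\<in>{0..t-1}-{k}. s j * \<alpha>^(t-1-j))"
    unfolding range by (simp add: sum_distrib_left algebra_simps)
  finally show ?thesis .
qed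

lemma cross_term_le:
  fixes u :: "nat \<Rightarrow> real^'m" and A :: "real^'d^'d" and B :: "real^'m^'d" and Q :: "real^'d^'d"
  assumes "\<And>x. norm (A *v x) \<le> \<alpha> * norm x" "\<And>u. norm (B *v u) \<le> \<beta> * norm u"
    and "\<And>x. norm (Q *v x) \<le> \<delta> * norm x"
    and "0 \<le> \<alpha>" "0 \<le> \<beta>" "0 \<le> \<delta>" "k < t"
    and "norm x0 \<le> \<gamma>" "\<And>j. j \<noteq> k \<Longrightarrow> j < t \<Longrightarrow> norm (u j) \<le> s j"
  shows "\<bar>state A B x0 (u(k := 0)) t \<bullet> (Q *v state A B 0 (\<lambda>j. if j = k then u k else 0) t)\<bar>
    \<le> \<beta> * norm (u k) * (\<delta> * (\<gamma> * \<alpha>^(2*t-k-1) + \<beta> * (\<Sum>j\<in>{0..t-1}-{k}. s j * \<alpha>^(2*t-j-k-2))))"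
proof -
  define y where "y = state A B x0 (u(k := 0)) t"
  define z where "z = state A B 0 (\<lambda>j. if j = k then u k else 0) t"
  define S where "S = {0..t-1} - {k}"
  define Y where "Y = \<gamma> * \<alpha>^t + \<beta> * (\<Sum>j\<in>S. s j * \<alpha>^(t-1-j))"
  have y: "norm y \<le> Y"
    unfolding y_def Y_def S_def by (rule norm_state_without_input_le[OF assms(1,2,4,5,7-9)])
  have z: "norm z \<le> \<alpha>^(t-k-1) * (\<beta> * norm (u k))"
    unfolding z_def by (rule norm_state_impulse_le[OF assms(1,2,4,7)])
  have Qz: "norm (Q *v z) \<le> \<delta> * (\<alpha>^(t-k-1) * (\<beta> * norm (u k)))"
    using assms(3)[of z] mult_left_mono[OF z assms(6)] by linarith
  have exponents: "Y * \<alpha>^(t-k-1) = \<gamma> * \<alpha>^(2*t-k-1) + \<beta> * (\<Sum>j\<in>S. s j * \<alpha>^(2*t-j-k-2))"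
  proof -
    have "\<alpha>^t * \<alpha>^(t-k-1) = \<alpha>^(2*t-k-1)"
      using assms(7) by (simp add: mult_2 flip: power_add)
    moreover have "(\<Sum>j\<in>S. s j * \<alpha>^(t-1-j)) * \<alpha>^(t-k-1) = (\<Sum>j\<in>S. s j * \<alpha>^(2*t-j-k-2))"
      unfolding sum_distrib_right
    proof (rule sum.cong)
      fix j
      assume "j \<in> S"
      then have "(t-1-j) + (t-k-1) = 2*t-j-k-2"
        using assms(7) by (auto simp: S_def)
      then show "s j * \<alpha>^(t-1-j) * \<alpha>^(t-k-1) = s j * \<alpha>^(2*t-j-k-2)"
        by (metis power_add mult.assoc)
    qed simp
    ultimately show ?thesis
      unfolding Y_def by (simp add: algebra_simps)
  qed
  have "\<bar>y \<bullet> (Q *v z)\<bar> \<le> norm y * norm (Q *v z)"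
    by (rule Cauchy_Schwarz_ineq2)
  also have "\<dots> \<le> Y * (\<delta> * (\<alpha>^(t-k-1) * (\<beta> * norm (u k))))"
    using y Qz order_trans[OF norm_ge_zero y] by (intro mult_mono) auto
  also have "\<dots> = \<beta> * norm (u k) * (\<delta> * (Y * \<alpha>^(t-k-1)))"
    by (simp add: algebra_simps)
  finally show ?thesis
    unfolding exponents y_def z_def S_def .
qed

lemma sum_cross_terms_le:
  fixes u :: "nat \<Rightarrow> real^'m" and A :: "real^'d^'d" and B :: "real^'m^'d" and Q :: "real^'d^'d"
  assumes "\<And>x. norm (A *v x) \<le> \<alpha> * norm x" "\<And>u. norm (B *v u) \<le> \<beta> * norm u"
    and "\<And>x. norm (Q *v x) \<le> \<delta> * norm x"
    and "0 \<le> \<alpha>" "0 \<le> \<beta>" "0 \<le> \<delta>"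
    and "norm x0 \<le> \<gamma>" "\<And>j. j < N \<Longrightarrow> j \<noteq> k \<Longrightarrow> norm (u j) \<le> s j"
  shows "(\<Sum>t\<in>{k+1..N}. \<bar>state A B x0 (u(k := 0)) t \<bullet> (Q *v state A B 0 (\<lambda>j. if j = k then u k else 0) t)\<bar>)
    \<le> \<beta> * norm (u k) * (\<delta> * (\<Sum>t\<in>{k+1..N}. \<gamma> * \<alpha>^(2*t-k-1)
          + \<beta> * (\<Sum>j\<in>{0..t-1}-{k}. s j * \<alpha>^(2*t-j-k-2))))"
proof -
  have "(\<Sum>t\<in>{k+1..N}. \<bar>state A B x0 (u(k := 0)) t \<bullet> (Q *v state A B 0 (\<lambda>j. if j = k then u k else 0) t)\<bar>)
    \<le> (\<Sum>t\<in>{k+1..N}. \<beta> * norm (u k) * (\<delta> * (\<gamma> * \<alpha>^(2*t-k-1)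
          + \<beta> * (\<Sum>j\<in>{0..t-1}-{k}. s j * \<alpha>^(2*t-j-k-2)))))"
    by (intro sum_mono cross_term_le[OF assms(1-6) _ assms(7)]) (auto intro: assms(8))
  then show ?thesis
    by (simp only: sum_distrib_left)
qed

lemma quadratic_form_scaleR:
  "(s *\<^sub>R u) \<bullet> (M *v (s *\<^sub>R u)) = s^2 * (u \<bullet> (M *v (u::real^'a)))"
  by (simp add: matrix_vector_mult_scaleR power2_eq_square)

lemma quadratic_form_add_scaleR:
  assumes "transpose M = M"
  shows "(y + s *\<^sub>R z) \<bullet> (M *v (y + s *\<^sub>R z))
    = y \<bullet> (M *v y) + 2 * s * (y \<bullet> (M *v z)) + s^2 * (z \<bullet> (M *v (z::real^'a)))"
proof -
  have "z \<bullet> (M *v y) = y \<bullet> (M *v z)"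
    using assms by (metis dot_lmul_matrix inner_commute transpose_matrix_vector)
  then show ?thesis
    by (simp add: algebra_simps inner_add_left inner_add_right power2_eq_square)
qed

lemma sym_pd_quadratic_form_nonneg: "sym_pd M \<Longrightarrow> 0 \<le> x \<bullet> (M *v x)"
  unfolding sym_pd_def by (cases "x = 0") (auto intro: less_imp_le)

lemma quadratic_max_at_one_imp_stationary:
  fixes c W P :: real
  assumes "0 \<le> P" and max: "\<And>s. c - 2 * s * W - s\<^sup>2 * P \<le> c - 2 * W - P"
  shows "W = - P"
proof -
  define e where "e = (W + P) / (P + 1)"
  have e: "e * (P + 1) = W + P"
    using assms(1) unfolding e_def by simp
  have "(c - 2 * (1 - e) * W - (1 - e)\<^sup>2 * P) - (c - 2 * W - P) = 2 * e * (W + P) - e\<^sup>2 * P"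
    by (simp add: power2_eq_square algebra_simps)
  also have "\<dots> = e\<^sup>2 * (P + 2)"
    unfolding e[symmetric] by (simp add: power2_eq_square algebra_simps)
  finally have "e\<^sup>2 * (P + 2) \<le> 0"
    using max[of "1 - e"] by linarith
  then have "e = 0"
    using assms(1) by (simp add: mult_le_0_iff)
  then show ?thesis
    using e by simp
qed

lemma agent_payoff_trade_update:
  assumes "k < N"
  shows "agent_payoff N A B x0 Q R lam u (e(k := v)) = agent_payoff N A B x0 Q R lam u e + lam k * (v - e k)"
proof -
  have "(\<Sum>t<N. run_util Q R (state A B x0 u t) (u t) + lam t * (e(k := v)) t)
      = (\<Sum>t<N. (run_util Q R (state A B x0 u t) (u t) + lam t * e t)
                + (if t = k then lam k * (v - e k) else 0))"
    by (rule sum.cong) (auto simp: algebra_simps)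
  also have "\<dots> = (\<Sum>t<N. run_util Q R (state A B x0 u t) (u t) + lam t * e t) + lam k * (v - e k)"
    using assms by (simp add: sum.distrib)
  finally show ?thesis
    unfolding agent_payoff_def by simp
qed

lemma optimal_trade_exhausts_budget:
  assumes k: "k < N" and lam: "0 < lam k"
    and feas: "agent_feasible N H a U E"
    and opt: "\<forall>u e. agent_feasible N H a u e \<longrightarrow>
           agent_payoff N A B x0 Q R lam u e \<le> agent_payoff N A B x0 Q R lam U E"
  shows "E k = a k - consumption H (U k)"
proof -
  have "agent_feasible N H a U (E(k := a k - consumption H (U k)))"
    using feas unfolding agent_feasible_def by auto
  then have "lam k * (a k - consumption H (U k) - E k) \<le> 0"
    using opt agent_payoff_trade_update[OF k, of A B x0 Q R lam U E] by fastforce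
  moreover have "E k \<le> a k - consumption H (U k)"
    using feas k unfolding agent_feasible_def by auto
  ultimately show ?thesis
    using lam by (simp add: mult_le_0_iff)
qed

lemma agent_payoff_scaled_input:
  fixes U :: "nat \<Rightarrow> real^'m" and A :: "real^'d^'d" and B x0
  assumes "k < N" "transpose Q = Q"
  defines "y \<equiv> state A B x0 (U(k := 0))"
    and "z \<equiv> state A B 0 (\<lambda>j. if j = k then U k else 0)"
  shows "agent_payoff N A B x0 Q R lam (U(k := s *\<^sub>R U k)) (E(k := a k - consumption H (s *\<^sub>R U k)))
    = (- (y N \<bullet> (Q *v y N)) + (\<Sum>t<N. - (y t \<bullet> (Q *v y t)) - (if t = k then 0 else U t \<bullet> (R *v U t))
           + (if t = k then lam k * a k else lam t * E t)))
      - 2 * s * (y N \<bullet> (Q *v z N) + (\<Sum>t<N. y t \<bullet> (Q *v z t)))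
      - s\<^sup>2 * (z N \<bullet> (Q *v z N) + (\<Sum>t<N. z t \<bullet> (Q *v z t)
           + (if t = k then U k \<bullet> (R *v U k) + lam k * consumption H (U k) else 0)))"
proof -
  have input: "U(k := s *\<^sub>R U k) = (\<lambda>j. (U(k := 0)) j + s *\<^sub>R (if j = k then U k else 0))"
    by (auto simp: fun_eq_iff)
  have state: "state A B x0 (U(k := s *\<^sub>R U k)) t = y t + s *\<^sub>R z t" for t
    unfolding input y_def z_def by (rule state_add_scaled_input)
  have running: "run_util Q R (y t + s *\<^sub>R z t) ((U(k := s *\<^sub>R U k)) t)
        + lam t * (E(k := a k - consumption H (s *\<^sub>R U k))) t
     = (- (y t \<bullet> (Q *v y t)) - (if t = k then 0 else U t \<bullet> (R *v U t))
           + (if t = k then lam k * a k else lam t * E t))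
       - 2 * s * (y t \<bullet> (Q *v z t))
       - s\<^sup>2 * (z t \<bullet> (Q *v z t) + (if t = k then U k \<bullet> (R *v U k) + lam k * consumption H (U k) else 0))"
    for t
    unfolding run_util_def quadratic_form_add_scaleR[OF assms(2)] consumption_def
    by (auto simp: quadratic_form_scaleR algebra_simps power2_eq_square)
  show ?thesis
    unfolding agent_payoff_def state running term_util_def quadratic_form_add_scaleR[OF assms(2)]
    using assms(1)
    by (simp add: sum.distrib sum_subtractf sum_distrib_left algebra_simps
        if_distrib[of "\<lambda>x. s\<^sup>2 * x"] cong: if_cong)
qed

lemma optimal_price_consumption_le_cross_terms:
  fixes U :: "nat \<Rightarrow> real^'m" and A :: "real^'d^'d" and B x0
  assumes k: "k < N" and Q: "sym_pd Q" and R: "sym_pd R"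
    and lam: "0 \<le> lam k" and h: "0 \<le> consumption H (U k)"
    and feas: "agent_feasible N H a U E"
    and opt: "\<forall>u e. agent_feasible N H a u e \<longrightarrow>
           agent_payoff N A B x0 Q R lam u e \<le> agent_payoff N A B x0 Q R lam U E"
  defines "y \<equiv> state A B x0 (U(k := 0))"
    and "z \<equiv> state A B 0 (\<lambda>j. if j = k then U k else 0)"
  shows "lam k * consumption H (U k) \<le> (\<Sum>t\<in>{k+1..N}. \<bar>y t \<bullet> (Q *v z t)\<bar>)"
proof -
  have QT: "transpose Q = Q"
    using Q by (simp add: sym_pd_def)
  define c where "c = - (y N \<bullet> (Q *v y N)) + (\<Sum>t<N. - (y t \<bullet> (Q *v y t))
      - (if t = k then 0 else U t \<bullet> (R *v U t)) + (if t = k then lam k * a k else lam t * E t))"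
  define W where "W = y N \<bullet> (Q *v z N) + (\<Sum>t<N. y t \<bullet> (Q *v z t))"
  define p where "p t = z t \<bullet> (Q *v z t)
      + (if t = k then U k \<bullet> (R *v U k) + lam k * consumption H (U k) else 0)" for t
  define P where "P = z N \<bullet> (Q *v z N) + (\<Sum>t<N. p t)"
  have payoff: "agent_payoff N A B x0 Q R lam (U(k := s *\<^sub>R U k))
      (E(k := a k - consumption H (s *\<^sub>R U k))) = c - 2 * s * W - s\<^sup>2 * P" for s
    unfolding c_def W_def P_def p_def y_def z_def by (rule agent_payoff_scaled_input[OF k QT])
  have max: "c - 2 * s * W - s\<^sup>2 * P \<le> c - 2 * W - P" for s
  proof -
    have "agent_feasible N H a (U(k := s *\<^sub>R U k)) (E(k := a k - consumption H (s *\<^sub>R U k)))"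
      using feas unfolding agent_feasible_def by auto
    then have "c - 2 * s * W - s\<^sup>2 * P \<le> agent_payoff N A B x0 Q R lam U E"
      using opt payoff by metis
    also have "\<dots> \<le> agent_payoff N A B x0 Q R lam U (E(k := a k - consumption H (U k)))"
      using feas k lam unfolding agent_payoff_trade_update[OF k] agent_feasible_def by simp
    also have "\<dots> = c - 2 * W - P"
      using payoff[of 1] by simp
    finally show ?thesis .
  qed
  have p_nonneg: "0 \<le> p t" for t
    using sym_pd_quadratic_form_nonneg[OF Q] sym_pd_quadratic_form_nonneg[OF R] lam h
    unfolding p_def by simp
  have "lam k * consumption H (U k) \<le> p k"
    using sym_pd_quadratic_form_nonneg[OF Q] sym_pd_quadratic_form_nonneg[OF R] unfolding p_def by simp
  also have "\<dots> \<le> (\<Sum>t<N. p t)"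
    using k p_nonneg by (intro member_le_sum) auto
  also have "\<dots> \<le> P"
    using sym_pd_quadratic_form_nonneg[OF Q] unfolding P_def by simp
  finally have P: "lam k * consumption H (U k) \<le> P" .
  have "0 \<le> P"
    using P lam h by (meson mult_nonneg_nonneg order_trans)
  then have "W = - P"
    using max by (rule quadratic_max_at_one_imp_stationary)
  with P have "lam k * consumption H (U k) \<le> \<bar>\<Sum>t\<le>N. y t \<bullet> (Q *v z t)\<bar>"
    unfolding W_def by (simp add: lessThan_Suc_atMost[symmetric])
  also have "\<dots> \<le> (\<Sum>t\<le>N. \<bar>y t \<bullet> (Q *v z t)\<bar>)"
    by (rule sum_abs)
  also have "\<dots> = (\<Sum>t\<in>{k+1..N}. \<bar>y t \<bullet> (Q *v z t)\<bar>)"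
    by (rule sum.mono_neutral_right) (auto simp: z_def state_impulse_before)
  finally show ?thesis .
qed

lemma equilibrium_consumption_le_supply:
  assumes CE: "competitive_equilibrium n N A B x0 Q R H a lam U E"
    and H: "\<forall>i<n. sym_pd (H i)" and i: "i < n" and j: "j < N"
  shows "consumption (H i) (U i j) \<le> (\<Sum>i<n. a i j)"
proof -
  have "consumption (H i) (U i j) \<le> (\<Sum>l<n. consumption (H l) (U l j))"
    using i H by (intro member_le_sum) (auto simp: consumption_def sym_pd_quadratic_form_nonneg)
  also have "\<dots> \<le> (\<Sum>l<n. a l j - E l j)"
    using CE j unfolding competitive_equilibrium_def agent_feasible_def by (intro sum_mono) fastforce
  also have "\<dots> = (\<Sum>l<n. a l j)"
    using CE j by (simp add: sum_subtractf competitive_equilibrium_def)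
  finally show ?thesis .
qed

lemma equilibrium_consumption_sum_eq_supply:
  assumes CE: "competitive_equilibrium n N A B x0 Q R H a lam U E"
    and k: "k < N" and lam: "0 < lam k"
  shows "(\<Sum>i<n. consumption (H i) (U i k)) = (\<Sum>i<n. a i k)"
proof -
  have "E i k = a i k - consumption (H i) (U i k)" if "i < n" for i
    using CE that unfolding competitive_equilibrium_def
    by (blast intro: optimal_trade_exhausts_budget[where lam = lam, OF k lam])
  then have "(\<Sum>i<n. consumption (H i) (U i k)) = (\<Sum>i<n. a i k - E i k)"
    by simp
  also have "\<dots> = (\<Sum>i<n. a i k)"
    using CE k by (simp add: sum_subtractf competitive_equilibrium_def)
  finally show ?thesis .
qed

lemma exists_ge_average:
  fixes f :: "nat \<Rightarrow> real"
  assumes "0 < n"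
  shows "\<exists>i<n. (\<Sum>i<n. f i) / n \<le> f i"
proof (rule ccontr)
  assume "\<not> ?thesis"
  then have "(\<Sum>i<n. f i) < (\<Sum>i<n. (\<Sum>i<n. f i) / n)"
    using assms by (intro sum_strict_mono) auto
  then show False
    using assms by simp
qed

lemma norm_le_sqrt_of_quadratic_form_le:
  assumes "0 < \<rho>" "\<rho> * (u \<bullet> u) \<le> u \<bullet> (M *v u)" "u \<bullet> (M *v u) \<le> c"
  shows "norm u \<le> sqrt (c / \<rho>)"
proof (rule real_le_rsqrt)
  show "(norm u)\<^sup>2 \<le> c / \<rho>"
    using assms by (simp add: power2_norm_eq_inner pos_le_divide_eq mult.commute)
qed

lemma equilibrium_input_norm_le:
  assumes CE: "competitive_equilibrium n N A B x0 Q R H a lam U E"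
    and H: "\<forall>i<n. sym_pd (H i)" "\<forall>i<n. \<forall>u. \<rho> * (u \<bullet> u) \<le> u \<bullet> (H i *v u)"
    and "0 < \<rho>" "i < n" "j < N"
  shows "norm (U i j) \<le> sqrt ((\<Sum>i<n. a i j) / \<rho>)"
  using norm_le_sqrt_of_quadratic_form_le[OF assms(4)] H(2) assms(5)
    equilibrium_consumption_le_supply[OF CE H(1) assms(5,6)]
  unfolding consumption_def by blast

lemma mult_sqrt_le_of_bounds:
  fixes \<rho> c m h \<nu> :: real
  assumes "0 < \<rho>" "0 \<le> c" "1 \<le> \<nu>" "0 \<le> m" "\<rho> * m\<^sup>2 \<le> h" "c / \<nu> \<le> h"
  shows "m * sqrt (c * \<rho>) / \<nu> \<le> h"
proof -
  have h: "0 \<le> h"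
    using assms(1,5) by (meson mult_nonneg_nonneg order_trans zero_le_power2 less_imp_le)
  have "m * sqrt (c * \<rho>) = sqrt (\<rho> * m\<^sup>2) * sqrt c"
    using assms(4) by (simp add: real_sqrt_mult)
  also have "\<dots> \<le> sqrt h * sqrt (\<nu> * h)"
    using assms(2,3,5,6) h by (intro mult_mono real_sqrt_le_mono) (auto simp: divide_le_eq mult.commute)
  also have "\<dots> = h * sqrt \<nu>"
    using h by (simp add: real_sqrt_mult)
  also have "\<dots> \<le> h * \<nu>"
  proof (intro mult_left_mono h)
    have "\<nu> \<le> \<nu>\<^sup>2"
      using assms(3) mult_right_mono[of 1 \<nu> \<nu>] by (simp add: power2_eq_square)
    then have "sqrt \<nu> \<le> sqrt (\<nu>\<^sup>2)"
      by (rule real_sqrt_le_mono)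
    then show "sqrt \<nu> \<le> \<nu>"
      using assms(3) by simp
  qed
  finally have "m * sqrt (c * \<rho>) \<le> h * \<nu>" .
  then show ?thesis
    using assms(3) by (subst pos_divide_le_eq) auto
qed

theorem theorem2:
  fixes n N :: nat
    and A :: "nat \<Rightarrow> real^'d^'d" and B :: "nat \<Rightarrow> real^'m^'d" and x0 :: "nat \<Rightarrow> real^'d"
    and H :: "nat \<Rightarrow> real^'m^'m" and a :: "nat \<Rightarrow> nat \<Rightarrow> real"
    and \<gamma> \<alpha> \<beta> \<rho> lamdag deltamax :: real
  assumes N: "N \<ge> 1"
    and pos: "\<gamma> > 0" "\<alpha> > 0" "\<beta> > 0" "\<rho> > 0"
    and x0_bd: "\<forall>i<n. norm (x0 i) \<le> \<gamma>"
    and A_bd: "\<forall>i<n. onorm (\<lambda>x. A i *v x) \<le> \<alpha>"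
    and B_bd: "\<forall>i<n. onorm (\<lambda>u. B i *v u) \<le> \<beta>"
    and H_pd: "\<forall>i<n. sym_pd (H i)"
    and H_bd: "\<forall>i<n. \<forall>u. \<rho> * (u \<bullet> u) \<le> u \<bullet> (H i *v u)"
    and C_pos: "\<forall>t<N. (\<Sum>i<n. a i t) > 0"
    and lam_pos: "lamdag > 0"
    and delta_pos: "deltamax > 0"
    and delta_cond: "\<forall>k<N.
        deltamax * (\<Sum>t\<in>{k+1..N}. \<gamma> * \<alpha> ^ (2*t - k - 1)
            + \<beta> * (\<Sum>j\<in>{0..t-1} - {k}. sqrt ((\<Sum>i<n. a i j) / \<rho>) * \<alpha> ^ (2*t - j - k - 2)))
        \<le> sqrt ((\<Sum>i<n. a i k) * \<rho>) / (real n * \<beta>) * lamdag"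
  shows "\<forall>Q :: nat \<Rightarrow> real^'d^'d. \<forall>R :: nat \<Rightarrow> real^'m^'m.
           (\<forall>i<n. sym_pd (Q i) \<and> sym_pd (R i) \<and> onorm (\<lambda>x. Q i *v x) \<le> deltamax) \<longrightarrow>
           (\<forall>lam U E. competitive_equilibrium n N A B x0 Q R H a lam U E \<longrightarrow>
              (\<forall>t<N. lam t \<le> lamdag))"
proof (intro allI impI)
  fix Q :: "nat \<Rightarrow> real^'d^'d" and R :: "nat \<Rightarrow> real^'m^'m" and lam U E k
  assume QR: "\<forall>i<n. sym_pd (Q i) \<and> sym_pd (R i) \<and> onorm (\<lambda>x. Q i *v x) \<le> deltamax"
    and CE: "competitive_equilibrium n N A B x0 Q R H a lam U E" and k: "k < N"
  define C where "C j = (\<Sum>i<n. a i j)" for j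
  show "lam k \<le> lamdag"
  proof (rule ccontr)
    assume "\<not> lam k \<le> lamdag"
    then have lam_k: "lamdag < lam k" by simp
    have C_k: "0 < C k" and n: "0 < n"
      using C_pos k unfolding C_def by (auto intro: gr0I)
    obtain i where i: "i < n" and mean: "C k / n \<le> consumption (H i) (U i k)"
      using exists_ge_average[OF n, of "\<lambda>i. consumption (H i) (U i k)"] lam_k lam_pos
        equilibrium_consumption_sum_eq_supply[OF CE k] unfolding C_def by auto
    define h m where "h = consumption (H i) (U i k)" and "m = norm (U i k)"
    have "lam k * h \<le> (\<Sum>t\<in>{k+1..N}. \<bar>state (A i) (B i) (x0 i) ((U i)(k := 0)) t
        \<bullet> (Q i *v state (A i) (B i) 0 (\<lambda>j. if j = k then U i k else 0) t)\<bar>)"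
      unfolding h_def using CE QR i k lam_k lam_pos H_pd unfolding competitive_equilibrium_def
      by (intro optimal_price_consumption_le_cross_terms)
        (auto simp: consumption_def sym_pd_quadratic_form_nonneg)
    also have "\<dots> \<le> \<beta> * m * (deltamax * (\<Sum>t\<in>{k+1..N}. \<gamma> * \<alpha> ^ (2*t - k - 1)
        + \<beta> * (\<Sum>j\<in>{0..t-1} - {k}. sqrt (C j / \<rho>) * \<alpha> ^ (2*t - j - k - 2))))"
      unfolding m_def C_def using pos delta_pos x0_bd A_bd B_bd QR i
      by (intro sum_cross_terms_le norm_matrix_vector_le_onorm equilibrium_input_norm_le[OF CE H_pd H_bd]) auto
    also have "\<dots> \<le> \<beta> * m * (sqrt (C k * \<rho>) / (real n * \<beta>) * lamdag)"
      using delta_cond k pos(3) unfolding C_def m_def by (intro mult_left_mono) auto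
    also have "\<dots> = m * sqrt (C k * \<rho>) / real n * lamdag"
      using pos(3) by simp
    also have "\<dots> \<le> h * lamdag"
      using mult_sqrt_le_of_bounds[OF pos(4) _ _ _ _ mean[folded h_def]] H_bd i C_k n lam_pos
      unfolding h_def m_def consumption_def
      by (intro mult_right_mono) (auto simp: power2_norm_eq_inner)
    finally have "lam k * h \<le> lamdag * h"
      by (simp add: mult.commute)
    moreover have "0 < h"
      using mean C_k n unfolding h_def by (meson divide_pos_pos of_nat_0_less_iff order_less_le_trans)
    ultimately show False
      using lam_k by simp
  qed
qed

end
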